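(* Suppose the predictions are stable: $\sqrt{K\,\mathrm{Var}(f^{(1)}(X)-\bar f(X)\mid f^{(1)})}\xrightarrow{L^1}0$ as $n\to\infty$. For $j\in[K]$ define $$\tilde F_j=\frac{1}{\sqrt N}\sum_{i=1}^N\Big(f^{(j)}(\tilde X_i)-\mathbb{E}_X[f^{(j)}(X)]-\big(\bar f(\tilde X_i)-\mathbb{E}[\bar f(X)]\big)\Big).$$ Then $\frac1K\sum_{j=1}^K\tilde F_j\xrightarrow{p}0$.
   Context: Setting: $(X_i,Y_i)_{i\le n}$ i.i.d. from $\mathbb{P}$; $\tilde X_1,\dots,\tilde X_N$ i.i.d. from the feature marginal $\mathbb{P}_X$, independent of the labeled data; $X\sim\mathbb{P}_X$ is an independent generic draw. Folds $I_1,\dots,I_K$ are consecutive blocks of size $n/K$ of $\{1,\dots,n\}$; $f^{(j)}$ is the output of a possibly randomized training algorithm applied to $\{(X_i,Y_i)\}_{i\notin I_j}$; $\bar f(x)=\mathbb{E}[f^{(1)}(x)]$. $\mathbb{E}_X$ and $\mathrm{Var}_X$ denote expectation and variance over the independent draw $X$ conditionally on everything else (so $\mathbb{E}_X[f^{(j)}(X)]$ is random through $f^{(j)}$). Second moments are finite. *)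

theory Defs
  imports "HOL-Probability.Probability"
begin

text \<open>Folds are 0-indexed: fold j (j < K) is the block
  {j*(n div K) ..< (j+1)*(n div K)} of the indices {0..<n}; the paper's fold j+1.
  The sample space is the canonical product of the labeled data Z_0..Z_(n-1) (iid P),
  the unlabeled features X~_0..X~_(N-1) (iid P_X) and the algorithm randomness
  xi_0..xi_(K-1) (iid R), all mutually independent.\<close>

definition feat_dist :: "('x \<times> 'y) measure \<Rightarrow> 'x measure \<Rightarrow> 'x measure" where
  "feat_dist P SX = distr P SX fst"

definition sample_space ::
  "('x \<times> 'y) measure \<Rightarrow> 'x measure \<Rightarrow> 'r measure \<Rightarrow> nat \<Rightarrow> nat \<Rightarrow> nat
   \<Rightarrow> ((nat \<Rightarrow> 'x \<times> 'y) \<times> (nat \<Rightarrow> 'x) \<times> (nat \<Rightarrow> 'r)) measure" where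
  "sample_space P SX R n N K =
     PiM {0..<n} (\<lambda>_. P) \<Otimes>\<^sub>M (PiM {0..<N} (\<lambda>_. feat_dist P SX) \<Otimes>\<^sub>M PiM {0..<K} (\<lambda>_. R))"

definition fold_idx :: "nat \<Rightarrow> nat \<Rightarrow> nat \<Rightarrow> nat \<Rightarrow> nat" where
  "fold_idx n K j k = (if k < j * (n div K) then k else k + n div K)"

definition train_data :: "nat \<Rightarrow> nat \<Rightarrow> nat \<Rightarrow> (nat \<Rightarrow> 'z) \<Rightarrow> (nat \<Rightarrow> 'z)" where
  "train_data n K j z = restrict (\<lambda>k. z (fold_idx n K j k)) {0..<n - n div K}"

text \<open>f^(j): the algorithm A (training set, randomness, point) applied to the data outside fold j.\<close>
definition cv_pred ::
  "((nat \<Rightarrow> 'x \<times> 'y) \<Rightarrow> 'r \<Rightarrow> 'x \<Rightarrow> real) \<Rightarrow> nat \<Rightarrow> nat \<Rightarrow> nat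
   \<Rightarrow> (nat \<Rightarrow> 'x \<times> 'y) \<times> (nat \<Rightarrow> 'x) \<times> (nat \<Rightarrow> 'r) \<Rightarrow> 'x \<Rightarrow> real" where
  "cv_pred A n K j \<omega> x = A (train_data n K j (fst \<omega>)) (snd (snd \<omega>) j) x"

text \<open>\<bar>f(x) = E[f^(1)(x)] (fold 0 here).\<close>
definition fbar ::
  "((nat \<Rightarrow> 'x \<times> 'y) \<times> (nat \<Rightarrow> 'x) \<times> (nat \<Rightarrow> 'r)) measure
   \<Rightarrow> ((nat \<Rightarrow> 'x \<times> 'y) \<Rightarrow> 'r \<Rightarrow> 'x \<Rightarrow> real) \<Rightarrow> nat \<Rightarrow> nat \<Rightarrow> 'x \<Rightarrow> real" where
  "fbar \<Omega> A n K x = (\<integral>\<omega>. cv_pred A n K 0 \<omega> x \<partial>\<Omega>)"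

definition var_X :: "'x measure \<Rightarrow> ('x \<Rightarrow> real) \<Rightarrow> real" where
  "var_X PX g = (\<integral>x. (g x - (\<integral>x'. g x' \<partial>PX))\<^sup>2 \<partial>PX)"

definition Ftilde ::
  "('x \<times> 'y) measure \<Rightarrow> 'x measure \<Rightarrow> 'r measure \<Rightarrow> ((nat \<Rightarrow> 'x \<times> 'y) \<Rightarrow> 'r \<Rightarrow> 'x \<Rightarrow> real)
   \<Rightarrow> nat \<Rightarrow> nat \<Rightarrow> nat \<Rightarrow> nat \<Rightarrow> (nat \<Rightarrow> 'x \<times> 'y) \<times> (nat \<Rightarrow> 'x) \<times> (nat \<Rightarrow> 'r) \<Rightarrow> real" where
  "Ftilde P SX R A n N K j \<omega> =
     (let PX = feat_dist P SX; fb = fbar (sample_space P SX R n N K) A n K;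
          f = cv_pred A n K j \<omega>; Xt = fst (snd \<omega>) in
      (1 / sqrt (real N)) *
        (\<Sum>i<N. f (Xt i) - (\<integral>x. f x \<partial>PX) - (fb (Xt i) - (\<integral>x. fb x \<partial>PX))))"

definition L1_to_zero :: "(nat \<Rightarrow> 'a measure) \<Rightarrow> (nat \<Rightarrow> 'a \<Rightarrow> real) \<Rightarrow> bool" where
  "L1_to_zero M Z \<longleftrightarrow> (\<forall>n. integrable (M n) (Z n)) \<and>
     (\<lambda>n. \<integral>\<omega>. \<bar>Z n \<omega>\<bar> \<partial>M n) \<longlonglongrightarrow> 0"

definition prob_to_zero :: "(nat \<Rightarrow> 'a measure) \<Rightarrow> (nat \<Rightarrow> 'a \<Rightarrow> real) \<Rightarrow> bool" where
  "prob_to_zero M Z \<longleftrightarrow> (\<forall>n. Z n \<in> borel_measurable (M n)) \<and>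
     (\<forall>e>0. (\<lambda>n. measure (M n) {\<omega> \<in> space (M n). e \<le> \<bar>Z n \<omega>\<bar>}) \<longlonglongrightarrow> 0)"

end

theory Submission
  imports Defs
begin

(* Conditionally on the labeled data and the algorithm's randomness, the average of the F~_j is
   N^(-1/2) times a sum of N iid centred terms c(X~_i), where c is the fold average of the centred
   residuals f^(j) - fbar. Chebyshev bounds the conditional probability that the average exceeds e
   by min(1, E c^2 / e^2) <= sqrt(E c^2) / e; since E c^2 <= (1/K) sum_j Var_X(f^(j) - fbar),
   subadditivity of the square root turns this into (1/(K e)) sum_j sqrt(K Var_X(f^(j) - fbar)).
   All folds' training sets and seeds have the same law, so integrating out the conditioning gives
   P(|average| >= e) <= E sqrt(K Var_X(f^(1) - fbar)) / e, which tends to 0 by stability. *)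

section \<open>Normalized sums of iid centred variables\<close>

lemma has_bochner_integral_mult_components_iid:
  fixes c :: "'a \<Rightarrow> real" and i k N :: nat
  assumes Q: "prob_space Q" and [measurable]: "c \<in> borel_measurable Q"
    and c2: "integrable Q (\<lambda>x. (c x)\<^sup>2)" and c0: "integral\<^sup>L Q c = 0"
    and ik: "i < N" "k < N"
  shows "has_bochner_integral (PiM {0..<N} (\<lambda>_. Q)) (\<lambda>x. c (x i) * c (x k))
           (if i = k then \<integral>x. (c x)\<^sup>2 \<partial>Q else 0)"
proof -
  let ?X = "PiM {0..<N} (\<lambda>_. Q)"
  have component: "distr ?X Q (\<lambda>x. x i) = Q"
    using distr_PiM_component[of "{0..<N}" "\<lambda>_. Q" i] Q ik by simp
  interpret Q: prob_space Q by (rule Q)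
  interpret product_sigma_finite "\<lambda>_. Q" by unfold_locales
  show ?thesis
  proof (cases "i = k")
    case True
    have "integrable ?X (\<lambda>x. (c (x i))\<^sup>2)"
      using c2 ik by (subst (asm) component[symmetric], subst (asm) integrable_distr_eq) auto
    moreover have "(\<integral>x. (c (x i))\<^sup>2 \<partial>?X) = (\<integral>x. (c x)\<^sup>2 \<partial>Q)"
      using ik by (subst (2) component[symmetric], subst integral_distr) auto
    ultimately show ?thesis
      using True by (simp add: has_bochner_integral_iff power2_eq_square)
  next
    case False
    define f where "f l = (if l = i \<or> l = k then c else (\<lambda>_. 1))" for l
    have f_integrable: "integrable Q (f l)" for l
      using Q.square_integrable_imp_integrable[OF _ c2] by (auto simp: f_def)
    have prod_f: "(\<Prod>l\<in>{0..<N}. f l (x l)) = c (x i) * c (x k)" for x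
    proof -
      have "(\<Prod>l\<in>{0..<N}. f l (x l)) = f i (x i) * f k (x k) * (\<Prod>l\<in>{0..<N}-{i}-{k}. f l (x l))"
        using ik False by (simp add: prod.remove[of _ i] prod.remove[of _ k] mult.assoc)
      also have "(\<Prod>l\<in>{0..<N}-{i}-{k}. f l (x l)) = 1"
        by (rule prod.neutral) (auto simp: f_def)
      finally show ?thesis by (simp add: f_def)
    qed
    have "has_bochner_integral ?X (\<lambda>x. \<Prod>l\<in>{0..<N}. f l (x l)) (\<Prod>l\<in>{0..<N}. integral\<^sup>L Q (f l))"
      by (simp add: has_bochner_integral_iff product_integrable_prod product_integral_prod f_integrable)
    moreover have "(\<Prod>l\<in>{0..<N}. integral\<^sup>L Q (f l)) = 0"
      using ik c0 by (intro prod_zero bexI[of _ i]) (auto simp: f_def)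
    ultimately show ?thesis
      using False by (simp add: prod_f)
  qed
qed

lemma has_bochner_integral_square_sum_iid:
  fixes c :: "'a \<Rightarrow> real"
  assumes "prob_space Q" and "c \<in> borel_measurable Q"
    and "integrable Q (\<lambda>x. (c x)\<^sup>2)" and "integral\<^sup>L Q c = 0"
  shows "has_bochner_integral (PiM {0..<N} (\<lambda>_. Q)) (\<lambda>x. (\<Sum>i<N. c (x i))\<^sup>2)
           (real N * (\<integral>x. (c x)\<^sup>2 \<partial>Q))"
proof -
  have "has_bochner_integral (PiM {0..<N} (\<lambda>_. Q)) (\<lambda>x. \<Sum>i<N. \<Sum>k<N. c (x i) * c (x k))
          (\<Sum>i<N. \<Sum>k<N. if i = k then \<integral>x. (c x)\<^sup>2 \<partial>Q else 0)"
    by (intro has_bochner_integral_sum has_bochner_integral_mult_components_iid assms) auto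
  then show ?thesis
    by (simp add: power2_eq_square sum_product)
qed

lemma prob_normalized_sum_iid_ge:
  fixes c :: "'a \<Rightarrow> real"
  assumes Q: "prob_space Q" and [measurable]: "c \<in> borel_measurable Q"
    and c2: "integrable Q (\<lambda>x. (c x)\<^sup>2)" and c0: "integral\<^sup>L Q c = 0"
    and e: "0 < e" and N: "0 < N"
  shows "measure (PiM {0..<N} (\<lambda>_. Q)) {x \<in> space (PiM {0..<N} (\<lambda>_. Q)).
            e \<le> \<bar>1 / sqrt (real N) * (\<Sum>i<N. c (x i))\<bar>} \<le> (\<integral>x. (c x)\<^sup>2 \<partial>Q) / e\<^sup>2"
proof -
  let ?X = "PiM {0..<N} (\<lambda>_. Q)"
  interpret X: prob_space ?X by (rule prob_space_PiM) (use Q in auto)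
  let ?Y = "\<lambda>x. 1 / sqrt (real N) * (\<Sum>i<N. c (x i))"
  have "has_bochner_integral ?X (\<lambda>x. 1 / real N * (\<Sum>i<N. c (x i))\<^sup>2) (1 / real N * (real N * (\<integral>x. (c x)\<^sup>2 \<partial>Q)))"
    by (intro has_bochner_integral_mult_right has_bochner_integral_square_sum_iid assms)
  moreover have "(?Y x)\<^sup>2 = 1 / real N * (\<Sum>i<N. c (x i))\<^sup>2" for x
    using N by (simp add: power_mult_distrib power_divide)
  ultimately have "has_bochner_integral ?X (\<lambda>x. (?Y x)\<^sup>2) (\<integral>x. (c x)\<^sup>2 \<partial>Q)"
    using N by simp
  then show ?thesis
    using X.second_moment_method[of ?Y e] e by (simp add: has_bochner_integral_iff)
qed

lemma sqrt_sum_le_sum_sqrt: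
  "(\<And>j. j \<in> J \<Longrightarrow> 0 \<le> v j) \<Longrightarrow> sqrt (\<Sum>j\<in>J. v j) \<le> (\<Sum>j\<in>J. sqrt (v j))"
proof (induction J rule: infinite_finite_induct)
  case (insert x F)
  then have "sqrt (\<Sum>j\<in>insert x F. v j) \<le> sqrt (v x) + sqrt (\<Sum>j\<in>F. v j)"
    by (auto intro: sqrt_add_le_add_sqrt sum_nonneg)
  also have "\<dots> \<le> sqrt (v x) + (\<Sum>j\<in>F. sqrt (v j))"
    using insert by auto
  finally show ?case
    using insert by simp
qed auto

lemma sqrt_mean_le_mean_sqrt_mult:
  assumes K: "0 < K" and v: "\<And>j. j < K \<Longrightarrow> 0 \<le> v j"
  shows "sqrt (1 / real K * (\<Sum>j<K. v j)) \<le> 1 / real K * (\<Sum>j<K. sqrt (real K * v j))"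
proof -
  have "sqrt (1 / real K * (\<Sum>j<K. v j)) = sqrt (\<Sum>j<K. v j) / sqrt (real K)"
    by (simp add: real_sqrt_divide)
  also have "\<dots> \<le> (\<Sum>j<K. sqrt (v j)) / sqrt (real K)"
    using v by (intro divide_right_mono sqrt_sum_le_sum_sqrt) auto
  also have "\<dots> = 1 / real K * (\<Sum>j<K. sqrt (real K * v j))"
  proof -
    have "sqrt (real K) * sqrt (real K) = real K"
      by simp
    then show ?thesis
      using K by (simp add: real_sqrt_mult flip: sum_distrib_left) (simp add: field_simps)
  qed
  finally show ?thesis .
qed

lemma min_one_divide_square_le:
  fixes u e :: real
  assumes "0 \<le> u" and "0 < e"
  shows "min 1 (u / e\<^sup>2) \<le> sqrt u / e"
proof -
  define t where "t = sqrt u / e"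
  have "u / e\<^sup>2 = t\<^sup>2"
    using assms by (simp add: t_def power_divide)
  moreover have "0 \<le> t"
    using assms by (simp add: t_def)
  then have "min 1 (t\<^sup>2) \<le> t"
    using mult_left_le[of t t] by (cases "t \<le> 1") (auto simp: power2_eq_square)
  ultimately show ?thesis
    by (simp add: t_def)
qed

lemma square_mean_le_mean_square:
  fixes d :: "nat \<Rightarrow> real"
  shows "(1 / real K * (\<Sum>j<K. d j))\<^sup>2 \<le> 1 / real K * (\<Sum>j<K. (d j)\<^sup>2)"
proof (cases "K = 0")
  case False
  have "(\<Sum>j<K. d j)\<^sup>2 \<le> (\<Sum>j<K. (d j)\<^sup>2) * real K"
    using sum_squared_le_sum_of_squares[of d "{..<K}"] by simp
  then show ?thesis
    using False by (simp add: power_mult_distrib power_divide field_simps power2_eq_square)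
qed simp

lemma integrable_square_diff:
  fixes f g :: "'a \<Rightarrow> real"
  assumes [measurable]: "f \<in> borel_measurable M" "g \<in> borel_measurable M"
    and "integrable M (\<lambda>x. (f x)\<^sup>2)" and "integrable M (\<lambda>x. (g x)\<^sup>2)"
  shows "integrable M (\<lambda>x. (f x - g x)\<^sup>2)"
proof (rule Bochner_Integration.integrable_bound)
  show "integrable M (\<lambda>x. 2 * (f x)\<^sup>2 + 2 * (g x)\<^sup>2)"
    using assms by auto
  have "(f x - g x)\<^sup>2 \<le> 2 * (f x)\<^sup>2 + 2 * (g x)\<^sup>2" for x
    using zero_le_power2[of "f x + g x"] by (simp add: power2_eq_square algebra_simps)
  then show "AE x in M. norm ((f x - g x)\<^sup>2) \<le> norm (2 * (f x)\<^sup>2 + 2 * (g x)\<^sup>2)"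
    by simp
qed measurable

lemma borel_measurable_var_X:
  fixes h :: "'b \<Rightarrow> 'a \<Rightarrow> real"
  assumes Q: "sigma_finite_measure Q"
    and h: "(\<lambda>z. h (fst z) (snd z)) \<in> borel_measurable (M \<Otimes>\<^sub>M Q)"
  shows "(\<lambda>d. var_X Q (h d)) \<in> borel_measurable M"
proof -
  have "(\<lambda>d. \<integral>x. h d x \<partial>Q) \<in> borel_measurable M"
    using sigma_finite_measure.borel_measurable_lebesgue_integral[OF Q, of h M] h
    by (simp add: split_beta')
  then have "(\<lambda>z. (h (fst z) (snd z) - (\<integral>x. h (fst z) x \<partial>Q))\<^sup>2) \<in> borel_measurable (M \<Otimes>\<^sub>M Q)"
    using h by measurable
  then show ?thesis
    using sigma_finite_measure.borel_measurable_lebesgue_integral[OF Q,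
        of "\<lambda>d x. (h d x - (\<integral>x. h d x \<partial>Q))\<^sup>2" M]
    by (simp add: split_beta' var_X_def)
qed

locale cross_fitting =
  fixes P :: "('x \<times> 'y) measure" and SX :: "'x measure" and SY :: "'y measure"
    and R :: "'r measure"
    and A :: "(nat \<Rightarrow> 'x \<times> 'y) \<Rightarrow> 'r \<Rightarrow> 'x \<Rightarrow> real"
    and n N K :: nat
  assumes prob_P: "prob_space P" and sets_P: "sets P = sets (SX \<Otimes>\<^sub>M SY)"
    and prob_R: "prob_space R"
    and K_pos: "0 < K" and N_pos: "0 < N"
    and A_measurable: "(\<lambda>(dr, x). A (fst dr) (snd dr) x)
        \<in> borel_measurable ((PiM {0..<n - n div K} (\<lambda>_. P) \<Otimes>\<^sub>M R) \<Otimes>\<^sub>M SX)"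
    and second_moment: "integrable (sample_space P SX R n N K \<Otimes>\<^sub>M feat_dist P SX)
        (\<lambda>(\<omega>, x). (cv_pred A n K 0 \<omega> x)\<^sup>2)"
begin

abbreviation "PX \<equiv> feat_dist P SX"
abbreviation "\<Omega> \<equiv> sample_space P SX R n N K"
abbreviation "Data \<equiv> PiM {0..<n} (\<lambda>_. P)"
abbreviation "Train \<equiv> PiM {0..<n - n div K} (\<lambda>_. P)"
abbreviation "Feats \<equiv> PiM {0..<N} (\<lambda>_. PX)"
abbreviation "Seeds \<equiv> PiM {0..<K} (\<lambda>_. R)"
abbreviation "fb \<equiv> fbar \<Omega> A n K"

lemma measurable_fst_P: "fst \<in> measurable P SX"
  using measurable_cong_sets[OF sets_P refl] measurable_fst by blast

lemma sets_PX [simp, measurable_cong]: "sets PX = sets SX"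
  by (simp add: feat_dist_def)

lemma space_PX [simp]: "space PX = space SX"
  by (simp add: feat_dist_def)

sublocale R: prob_space R
  by (rule prob_R)

sublocale PX: prob_space PX
  unfolding feat_dist_def by (rule prob_space.prob_space_distr[OF prob_P measurable_fst_P])

sublocale Data: prob_space Data
  by (rule prob_space_PiM) (use prob_P in auto)

sublocale Feats: prob_space Feats
  by (rule prob_space_PiM) (use PX.prob_space_axioms in auto)

sublocale Seeds: prob_space Seeds
  by (rule prob_space_PiM) (use prob_R in auto)

sublocale Feats_Seeds: pair_prob_space Feats Seeds ..

sublocale Sample: pair_prob_space Data "Feats \<Otimes>\<^sub>M Seeds" ..

lemma sample_space_eq: "\<Omega> = Data \<Otimes>\<^sub>M (Feats \<Otimes>\<^sub>M Seeds)"
  by (simp add: sample_space_def)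

sublocale \<Omega>: prob_space \<Omega>
  unfolding sample_space_eq by (rule prob_space_pair) unfold_locales

lemma fold_idx_less: "k < n - n div K \<Longrightarrow> fold_idx n K j k < n"
  unfolding fold_idx_def by auto

lemma inj_on_fold_idx: "inj_on (fold_idx n K j) {0..<n - n div K}"
  unfolding fold_idx_def inj_on_def by auto

lemma measurable_train_data: "train_data n K j \<in> measurable Data Train"
  unfolding train_data_def
  by (intro measurable_restrict measurable_component_singleton) (auto intro: fold_idx_less)

lemma distr_train_data: "distr Data Train (train_data n K j) = Train"
proof -
  have "distr Data (PiM {0..<n - n div K} (\<lambda>i. (\<lambda>_. P) (fold_idx n K j i)))
          (\<lambda>\<omega>. \<lambda>k\<in>{0..<n - n div K}. \<omega> (fold_idx n K j k))
        = PiM {0..<n - n div K} (\<lambda>i. (\<lambda>_. P) (fold_idx n K j i))"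
    by (rule distr_PiM_reindex) (use prob_P inj_on_fold_idx fold_idx_less in auto)
  then show ?thesis
    unfolding train_data_def by (simp add: restrict_def)
qed

lemma measurable_fold_input:
  "j < K \<Longrightarrow> (\<lambda>\<omega>. (train_data n K j (fst \<omega>), snd (snd \<omega>) j)) \<in> measurable \<Omega> (Train \<Otimes>\<^sub>M R)"
  unfolding sample_space_eq
  by (intro measurable_Pair measurable_compose[OF measurable_fst measurable_train_data]
      measurable_compose[OF measurable_snd] measurable_compose[OF measurable_snd]
      measurable_component_singleton) simp

lemma measurable_A: "(\<lambda>(dr, x). A (fst dr) (snd dr) x) \<in> borel_measurable ((Train \<Otimes>\<^sub>M R) \<Otimes>\<^sub>M PX)"
  using A_measurable by (subst measurable_cong_sets[OF sets_pair_measure_cong[OF refl sets_PX] refl])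

lemma measurable_fold_pred:
  assumes "d \<in> space Train" "\<rho> \<in> space R"
  shows "A d \<rho> \<in> borel_measurable PX"
  using measurable_compose_Pair1[OF _ measurable_A, of "(d, \<rho>)"] assms
  by (simp add: space_pair_measure)

lemma measurable_cv_pred:
  assumes j: "j < K"
  shows "(\<lambda>(\<omega>, x). cv_pred A n K j \<omega> x) \<in> borel_measurable (\<Omega> \<Otimes>\<^sub>M PX)"
proof -
  have "(\<lambda>(\<omega>, x). ((train_data n K j (fst \<omega>), snd (snd \<omega>) j), x))
          \<in> measurable (\<Omega> \<Otimes>\<^sub>M PX) ((Train \<Otimes>\<^sub>M R) \<Otimes>\<^sub>M PX)"
    using measurable_fold_input[OF j]
    by (auto intro!: measurable_Pair measurable_compose[OF measurable_fst] simp: split_beta')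
  from measurable_compose[OF this measurable_A] show ?thesis
    by (simp add: cv_pred_def split_beta')
qed

lemma nn_integral_sample_space:
  assumes H: "H \<in> borel_measurable \<Omega>"
  shows "integral\<^sup>N \<Omega> H = (\<integral>\<^sup>+ a. \<integral>\<^sup>+ r. \<integral>\<^sup>+ x. H (a, x, r) \<partial>Feats \<partial>Seeds \<partial>Data)"
proof -
  have "integral\<^sup>N \<Omega> H = (\<integral>\<^sup>+ a. \<integral>\<^sup>+ y. H (a, y) \<partial>(Feats \<Otimes>\<^sub>M Seeds) \<partial>Data)"
    using H unfolding sample_space_eq by (rule Feats_Seeds.P.nn_integral_fst[symmetric])
  also have "\<dots> = (\<integral>\<^sup>+ a. \<integral>\<^sup>+ r. \<integral>\<^sup>+ x. H (a, x, r) \<partial>Feats \<partial>Seeds \<partial>Data)"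
  proof (rule nn_integral_cong)
    fix a assume "a \<in> space Data"
    then have "(\<lambda>y. H (a, y)) \<in> borel_measurable (Feats \<Otimes>\<^sub>M Seeds)"
      using H unfolding sample_space_eq by (rule measurable_compose_Pair1)
    then show "(\<integral>\<^sup>+ y. H (a, y) \<partial>(Feats \<Otimes>\<^sub>M Seeds)) = (\<integral>\<^sup>+ r. \<integral>\<^sup>+ x. H (a, x, r) \<partial>Feats \<partial>Seeds)"
      by (subst Feats_Seeds.nn_integral_snd[symmetric]) auto
  qed
  finally show ?thesis .
qed

lemma nn_integral_fold_input:
  assumes j: "j < K" and Phi: "Phi \<in> borel_measurable (Train \<Otimes>\<^sub>M R)"
  shows "(\<integral>\<^sup>+ \<omega>. Phi (train_data n K j (fst \<omega>), snd (snd \<omega>) j) \<partial>\<Omega>) = integral\<^sup>N (Train \<Otimes>\<^sub>M R) Phi"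
proof -
  have "(\<integral>\<^sup>+ \<omega>. Phi (train_data n K j (fst \<omega>), snd (snd \<omega>) j) \<partial>\<Omega>)
      = (\<integral>\<^sup>+ a. \<integral>\<^sup>+ r. Phi (train_data n K j a, r j) \<partial>Seeds \<partial>Data)"
    using nn_integral_sample_space[OF measurable_compose[OF measurable_fold_input[OF j] Phi]]
    by (simp add: Feats.emeasure_space_1)
  also have "\<dots> = (\<integral>\<^sup>+ a. \<integral>\<^sup>+ r. Phi (train_data n K j a, r) \<partial>R \<partial>Data)"
  proof (rule nn_integral_cong)
    fix a assume "a \<in> space Data"
    then have "train_data n K j a \<in> space Train"
      using measurable_train_data by (auto simp: measurable_def)
    then have Phi_a: "(\<lambda>r. Phi (train_data n K j a, r)) \<in> borel_measurable R"
      using Phi by (rule measurable_compose_Pair1)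
    have "(\<integral>\<^sup>+ r. Phi (train_data n K j a, r) \<partial>R)
        = (\<integral>\<^sup>+ r. Phi (train_data n K j a, r) \<partial>distr Seeds R (\<lambda>r. r j))"
      using distr_PiM_component[of "{0..<K}" "\<lambda>_. R" j] prob_R j by simp
    also have "\<dots> = (\<integral>\<^sup>+ r. Phi (train_data n K j a, r j) \<partial>Seeds)"
      using Phi_a j by (subst nn_integral_distr) auto
    finally show "(\<integral>\<^sup>+ r. Phi (train_data n K j a, r j) \<partial>Seeds) = (\<integral>\<^sup>+ r. Phi (train_data n K j a, r) \<partial>R)"
      by simp
  qed
  also have "\<dots> = (\<integral>\<^sup>+ d. \<integral>\<^sup>+ r. Phi (d, r) \<partial>R \<partial>distr Data Train (train_data n K j))"
    using Phi by (subst nn_integral_distr) (auto intro: measurable_train_data)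
  also have "\<dots> = integral\<^sup>N (Train \<Otimes>\<^sub>M R) Phi"
    unfolding distr_train_data using Phi by (rule R.nn_integral_fst)
  finally show ?thesis .
qed

lemma measurable_fbar: "fb \<in> borel_measurable PX"
proof -
  have "(\<lambda>(x, \<omega>). cv_pred A n K 0 \<omega> x) \<in> borel_measurable (PX \<Otimes>\<^sub>M \<Omega>)"
    using measurable_pair_swap[OF measurable_cv_pred[OF K_pos]] by (simp add: split_beta')
  then show ?thesis
    unfolding fbar_def using \<Omega>.borel_measurable_lebesgue_integral[of "\<lambda>x \<omega>. cv_pred A n K 0 \<omega> x" PX]
    by (simp add: split_beta')
qed

lemma measurable_square_cv_pred:
  "(\<lambda>z. ennreal ((cv_pred A n K 0 (fst z) (snd z))\<^sup>2)) \<in> borel_measurable (\<Omega> \<Otimes>\<^sub>M PX)"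
  using measurable_cv_pred[OF K_pos] by (simp add: split_beta')

lemma nn_integral_square_cv_pred_finite:
  "(\<integral>\<^sup>+ z. ennreal ((cv_pred A n K 0 (fst z) (snd z))\<^sup>2) \<partial>(\<Omega> \<Otimes>\<^sub>M PX)) \<noteq> \<infinity>"
  using integrableD(2)[OF second_moment] by (simp add: split_beta')

lemma square_fbar_le:
  assumes x: "x \<in> space PX"
  shows "ennreal ((fb x)\<^sup>2) \<le> (\<integral>\<^sup>+ \<omega>. ennreal ((cv_pred A n K 0 \<omega> x)\<^sup>2) \<partial>\<Omega>)"
proof (cases "(\<integral>\<^sup>+ \<omega>. ennreal ((cv_pred A n K 0 \<omega> x)\<^sup>2) \<partial>\<Omega>) = \<infinity>")
  case False
  have [measurable]: "(\<lambda>\<omega>. cv_pred A n K 0 \<omega> x) \<in> borel_measurable \<Omega>"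
    using measurable_compose[OF measurable_Pair[OF measurable_ident_sets[OF refl] measurable_const[OF x]]
        measurable_cv_pred[OF K_pos]] by simp
  have square: "integrable \<Omega> (\<lambda>\<omega>. (cv_pred A n K 0 \<omega> x)\<^sup>2)"
    using False by (intro integrableI_nonneg) (auto simp: less_top)
  then have "(fb x)\<^sup>2 \<le> (\<integral>\<omega>. (cv_pred A n K 0 \<omega> x)\<^sup>2 \<partial>\<Omega>)"
    using \<Omega>.variance_eq[OF \<Omega>.square_integrable_imp_integrable[OF _ square] square]
      \<Omega>.variance_positive[of "\<lambda>\<omega>. cv_pred A n K 0 \<omega> x"]
    by (simp add: fbar_def)
  also have "ennreal \<dots> = (\<integral>\<^sup>+ \<omega>. ennreal ((cv_pred A n K 0 \<omega> x)\<^sup>2) \<partial>\<Omega>)"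
    using square by (subst nn_integral_eq_integral) auto
  finally show ?thesis
    by (simp add: ennreal_leI)
qed simp

lemma integrable_square_fbar: "integrable PX (\<lambda>x. (fb x)\<^sup>2)"
proof (rule integrableI_nonneg)
  interpret \<Omega>_PX: pair_prob_space \<Omega> PX ..
  show "(\<lambda>x. (fb x)\<^sup>2) \<in> borel_measurable PX"
    using measurable_fbar by measurable
  have "(\<integral>\<^sup>+ x. ennreal ((fb x)\<^sup>2) \<partial>PX) \<le> (\<integral>\<^sup>+ x. \<integral>\<^sup>+ \<omega>. ennreal ((cv_pred A n K 0 \<omega> x)\<^sup>2) \<partial>\<Omega> \<partial>PX)"
    by (intro nn_integral_mono square_fbar_le)
  also have "\<dots> = (\<integral>\<^sup>+ z. ennreal ((cv_pred A n K 0 (fst z) (snd z))\<^sup>2) \<partial>(\<Omega> \<Otimes>\<^sub>M PX))"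
    using \<Omega>_PX.nn_integral_snd[OF measurable_square_cv_pred] by simp
  finally show "(\<integral>\<^sup>+ x. ennreal ((fb x)\<^sup>2) \<partial>PX) < \<infinity>"
    using nn_integral_square_cv_pred_finite by (auto simp: less_top top_unique)
qed auto

lemma integrable_fbar: "integrable PX fb"
  by (rule PX.square_integrable_imp_integrable[OF measurable_fbar integrable_square_fbar])

lemma measurable_nn_integral_square_A:
  "(\<lambda>dr. \<integral>\<^sup>+ x. ennreal ((A (fst dr) (snd dr) x)\<^sup>2) \<partial>PX) \<in> borel_measurable (Train \<Otimes>\<^sub>M R)"
proof -
  have "(\<lambda>z. ennreal ((A (fst (fst z)) (snd (fst z)) (snd z))\<^sup>2)) \<in> borel_measurable ((Train \<Otimes>\<^sub>M R) \<Otimes>\<^sub>M PX)"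
    using measurable_A by (simp add: split_beta')
  then show ?thesis
    using PX.borel_measurable_nn_integral[of "\<lambda>dr x. ennreal ((A (fst dr) (snd dr) x)\<^sup>2)" "Train \<Otimes>\<^sub>M R"]
    by (simp add: split_beta')
qed

lemma nn_integral_square_fold_finite:
  assumes j: "j < K"
  shows "(\<integral>\<^sup>+ \<omega>. \<integral>\<^sup>+ x. ennreal ((A (train_data n K j (fst \<omega>)) (snd (snd \<omega>) j) x)\<^sup>2) \<partial>PX \<partial>\<Omega>) \<noteq> \<infinity>"
proof -
  have "(\<integral>\<^sup>+ \<omega>. \<integral>\<^sup>+ x. ennreal ((A (train_data n K j (fst \<omega>)) (snd (snd \<omega>) j) x)\<^sup>2) \<partial>PX \<partial>\<Omega>)
      = (\<integral>\<^sup>+ \<omega>. \<integral>\<^sup>+ x. ennreal ((cv_pred A n K 0 \<omega> x)\<^sup>2) \<partial>PX \<partial>\<Omega>)"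
    using nn_integral_fold_input[OF j measurable_nn_integral_square_A]
      nn_integral_fold_input[OF K_pos measurable_nn_integral_square_A]
    by (simp add: cv_pred_def)
  also have "\<dots> = (\<integral>\<^sup>+ z. ennreal ((cv_pred A n K 0 (fst z) (snd z))\<^sup>2) \<partial>(\<Omega> \<Otimes>\<^sub>M PX))"
    using PX.nn_integral_fst[OF measurable_square_cv_pred] by simp
  finally show ?thesis
    using nn_integral_square_cv_pred_finite by simp
qed

definition square_integrable_folds :: "(nat \<Rightarrow> 'x \<times> 'y) \<Rightarrow> (nat \<Rightarrow> 'r) \<Rightarrow> bool" where
  "square_integrable_folds a r \<longleftrightarrow> (\<forall>j<K. integrable PX (\<lambda>x. (A (train_data n K j a) (r j) x)\<^sup>2))"

lemma measurable_fold_pred_sample: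
  assumes "a \<in> space Data" "r \<in> space Seeds" "j < K"
  shows "A (train_data n K j a) (r j) \<in> borel_measurable PX"
  using measurable_space[OF measurable_train_data assms(1)] assms(2,3)
  by (intro measurable_fold_pred) (auto simp: space_PiM)

lemma AE_nn_integral_square_folds_finite:
  "AE a in Data. AE r in Seeds. \<forall>j\<in>{..<K}.
     (\<integral>\<^sup>+ x. ennreal ((A (train_data n K j a) (r j) x)\<^sup>2) \<partial>PX) \<noteq> \<infinity>"
proof -
  let ?G = "\<lambda>j \<omega>. \<integral>\<^sup>+ x. ennreal ((A (train_data n K j (fst \<omega>)) (snd (snd \<omega>) j) x)\<^sup>2) \<partial>PX"
  have "AE \<omega> in \<Omega>. ?G j \<omega> \<noteq> \<infinity>" if "j < K" for j
    using that measurable_compose[OF measurable_fold_input measurable_nn_integral_square_A]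
    by (intro nn_integral_noteq_infinite nn_integral_square_fold_finite) auto
  then have "AE \<omega> in \<Omega>. \<forall>j\<in>{..<K}. ?G j \<omega> \<noteq> \<infinity>"
    by (intro AE_finite_allI) auto
  then have "AE a in Data. AE y in Feats \<Otimes>\<^sub>M Seeds. \<forall>j\<in>{..<K}. ?G j (a, y) \<noteq> \<infinity>"
    unfolding sample_space_eq by (rule Sample.AE_pair)
  then show ?thesis
  proof (rule eventually_mono)
    fix a
    assume "AE y in Feats \<Otimes>\<^sub>M Seeds. \<forall>j\<in>{..<K}. ?G j (a, y) \<noteq> \<infinity>"
    then have "AE x in Feats. AE r in Seeds. \<forall>j\<in>{..<K}. ?G j (a, x, r) \<noteq> \<infinity>"
      by (rule Feats_Seeds.AE_pair)
    then show "AE r in Seeds. \<forall>j\<in>{..<K}. (\<integral>\<^sup>+ x. ennreal ((A (train_data n K j a) (r j) x)\<^sup>2) \<partial>PX) \<noteq> \<infinity>"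
      by simp
  qed
qed

lemma AE_square_integrable_folds: "AE a in Data. AE r in Seeds. square_integrable_folds a r"
  using AE_nn_integral_square_folds_finite
proof (rule AE_mp)
  show "AE a in Data. (AE r in Seeds. \<forall>j\<in>{..<K}. (\<integral>\<^sup>+ x. ennreal ((A (train_data n K j a) (r j) x)\<^sup>2) \<partial>PX) \<noteq> \<infinity>)
      \<longrightarrow> (AE r in Seeds. square_integrable_folds a r)"
  proof (rule AE_I2, rule impI)
    fix a
    assume a: "a \<in> space Data"
      and "AE r in Seeds. \<forall>j\<in>{..<K}. (\<integral>\<^sup>+ x. ennreal ((A (train_data n K j a) (r j) x)\<^sup>2) \<partial>PX) \<noteq> \<infinity>"
    then show "AE r in Seeds. square_integrable_folds a r"
      using measurable_fold_pred_sample[OF a] unfolding square_integrable_folds_def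
      by (elim AE_mp) (auto intro!: AE_I2 integrableI_nonneg simp: less_top)
  qed
qed

section \<open>The bound conditional on training data and seeds\<close>

definition resid :: "(nat \<Rightarrow> 'x \<times> 'y) \<Rightarrow> (nat \<Rightarrow> 'r) \<Rightarrow> nat \<Rightarrow> 'x \<Rightarrow> real" where
  "resid a r j x = A (train_data n K j a) (r j) x - fb x"

definition centred_mean :: "(nat \<Rightarrow> 'x \<times> 'y) \<Rightarrow> (nat \<Rightarrow> 'r) \<Rightarrow> 'x \<Rightarrow> real" where
  "centred_mean a r x = 1 / real K * (\<Sum>j<K. resid a r j x - integral\<^sup>L PX (resid a r j))"

definition fold_stability :: "(nat \<Rightarrow> 'x \<times> 'y) \<Rightarrow> 'r \<Rightarrow> real" where
  "fold_stability d \<rho> = sqrt (real K * var_X PX (\<lambda>x. A d \<rho> x - fb x))"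

definition fold_bound :: "(nat \<Rightarrow> 'x \<times> 'y) \<Rightarrow> (nat \<Rightarrow> 'r) \<Rightarrow> real" where
  "fold_bound a r = 1 / real K * (\<Sum>j<K. fold_stability (train_data n K j a) (r j))"

definition mean_Ftilde :: "(nat \<Rightarrow> 'x \<times> 'y) \<times> (nat \<Rightarrow> 'x) \<times> (nat \<Rightarrow> 'r) \<Rightarrow> real" where
  "mean_Ftilde \<omega> = 1 / real K * (\<Sum>j<K. Ftilde P SX R A n N K j \<omega>)"

lemma fold_stability_nonneg: "0 \<le> fold_stability d \<rho>"
  by (simp add: fold_stability_def var_X_def)

lemma fold_bound_nonneg: "0 \<le> fold_bound a r"
  unfolding fold_bound_def by (intro mult_nonneg_nonneg sum_nonneg fold_stability_nonneg) auto

context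
  fixes a r
  assumes a: "a \<in> space Data" and r: "r \<in> space Seeds" and folds: "square_integrable_folds a r"
begin

lemma measurable_resid: "j < K \<Longrightarrow> resid a r j \<in> borel_measurable PX"
  unfolding resid_def[abs_def]
  by (intro borel_measurable_diff measurable_fold_pred_sample[OF a r] measurable_fbar)

lemma integrable_square_resid: "j < K \<Longrightarrow> integrable PX (\<lambda>x. (resid a r j x)\<^sup>2)"
  unfolding resid_def[abs_def] using folds
  by (intro integrable_square_diff measurable_fold_pred_sample[OF a r] measurable_fbar integrable_square_fbar)
    (auto simp: square_integrable_folds_def)

lemma integral_resid:
  assumes j: "j < K"
  shows "integral\<^sup>L PX (resid a r j) = integral\<^sup>L PX (A (train_data n K j a) (r j)) - integral\<^sup>L PX fb"
proof -
  have "integrable PX (A (train_data n K j a) (r j))"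
    using folds j PX.square_integrable_imp_integrable[OF measurable_fold_pred_sample[OF a r j]]
    by (simp add: square_integrable_folds_def)
  then show ?thesis
    unfolding resid_def[abs_def] using integrable_fbar by simp
qed

lemma integrable_square_centred_resid:
  "j < K \<Longrightarrow> integrable PX (\<lambda>x. (resid a r j x - integral\<^sup>L PX (resid a r j))\<^sup>2)"
  by (intro integrable_square_diff measurable_resid integrable_square_resid) auto

lemma integrable_mean_square_centred_resid:
  "integrable PX (\<lambda>x. 1 / real K * (\<Sum>j<K. (resid a r j x - integral\<^sup>L PX (resid a r j))\<^sup>2))"
  by (intro integrable_mult_right Bochner_Integration.integrable_sum integrable_square_centred_resid) auto

lemma measurable_centred_mean: "centred_mean a r \<in> borel_measurable PX"
  unfolding centred_mean_def[abs_def]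
  by (intro borel_measurable_times borel_measurable_const borel_measurable_sum
      borel_measurable_diff measurable_resid) auto

lemma integral_centred_mean: "integral\<^sup>L PX (centred_mean a r) = 0"
proof -
  have "integrable PX (resid a r j)" if "j < K" for j
    by (rule PX.square_integrable_imp_integrable[OF measurable_resid[OF that] integrable_square_resid[OF that]])
  then show ?thesis
    unfolding centred_mean_def by (simp add: Bochner_Integration.integral_sum PX.prob_space[unfolded space_PX])
qed

lemma integrable_square_centred_mean: "integrable PX (\<lambda>x. (centred_mean a r x)\<^sup>2)"
proof (rule Bochner_Integration.integrable_bound[OF integrable_mean_square_centred_resid])
  show "AE x in PX. norm ((centred_mean a r x)\<^sup>2)
      \<le> norm (1 / real K * (\<Sum>j<K. (resid a r j x - integral\<^sup>L PX (resid a r j))\<^sup>2))"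
    unfolding centred_mean_def using square_mean_le_mean_square
    by (auto intro!: AE_I2 simp: abs_of_nonneg sum_nonneg)
qed (use measurable_centred_mean in measurable)

lemma integral_square_centred_mean_le:
  "(\<integral>x. (centred_mean a r x)\<^sup>2 \<partial>PX) \<le> 1 / real K * (\<Sum>j<K. var_X PX (resid a r j))"
proof -
  have "(\<integral>x. (centred_mean a r x)\<^sup>2 \<partial>PX)
      \<le> (\<integral>x. 1 / real K * (\<Sum>j<K. (resid a r j x - integral\<^sup>L PX (resid a r j))\<^sup>2) \<partial>PX)"
    using integrable_square_centred_mean integrable_mean_square_centred_resid
    unfolding centred_mean_def by (intro integral_mono square_mean_le_mean_square)
  also have "\<dots> = 1 / real K * (\<Sum>j<K. var_X PX (resid a r j))"
    using integrable_square_centred_resid by (simp add: Bochner_Integration.integral_sum var_X_def)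
  finally show ?thesis .
qed

lemma mean_Ftilde_section:
  "mean_Ftilde (a, xt, r) = 1 / sqrt (real N) * (\<Sum>i<N. centred_mean a r (xt i))"
proof -
  have "Ftilde P SX R A n N K j (a, xt, r)
      = 1 / sqrt (real N) * (\<Sum>i<N. resid a r j (xt i) - integral\<^sup>L PX (resid a r j))" if "j < K" for j
    unfolding Ftilde_def Let_def cv_pred_def integral_resid[OF that]
    by (simp add: resid_def algebra_simps)
  then have "mean_Ftilde (a, xt, r)
      = 1 / real K * (\<Sum>j<K. 1 / sqrt (real N) * (\<Sum>i<N. resid a r j (xt i) - integral\<^sup>L PX (resid a r j)))"
    unfolding mean_Ftilde_def by simp
  also have "\<dots> = 1 / sqrt (real N) * (\<Sum>i<N. 1 / real K * (\<Sum>j<K. resid a r j (xt i) - integral\<^sup>L PX (resid a r j)))"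
    unfolding sum_distrib_left by (subst sum.swap) (simp only: mult.left_commute)
  finally show ?thesis
    unfolding centred_mean_def .
qed

lemma prob_mean_Ftilde_section_ge:
  assumes e: "0 < e"
  shows "measure Feats {xt \<in> space Feats. e \<le> \<bar>mean_Ftilde (a, xt, r)\<bar>} \<le> fold_bound a r / e"
proof -
  have var_nonneg: "0 \<le> var_X PX (resid a r j)" for j
    by (simp add: var_X_def)
  have "measure Feats {xt \<in> space Feats. e \<le> \<bar>mean_Ftilde (a, xt, r)\<bar>}
      = measure Feats {xt \<in> space Feats. e \<le> \<bar>1 / sqrt (real N) * (\<Sum>i<N. centred_mean a r (xt i))\<bar>}"
    by (simp add: mean_Ftilde_section)
  also have "\<dots> \<le> min 1 ((\<integral>x. (centred_mean a r x)\<^sup>2 \<partial>PX) / e\<^sup>2)"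
    using prob_normalized_sum_iid_ge[OF PX.prob_space_axioms measurable_centred_mean
        integrable_square_centred_mean integral_centred_mean e N_pos] Feats.prob_le_1
    by simp
  also have "\<dots> \<le> min 1 ((1 / real K * (\<Sum>j<K. var_X PX (resid a r j))) / e\<^sup>2)"
    using integral_square_centred_mean_le e by (intro min.mono divide_right_mono) auto
  also have "\<dots> \<le> sqrt (1 / real K * (\<Sum>j<K. var_X PX (resid a r j))) / e"
    by (intro min_one_divide_square_le mult_nonneg_nonneg sum_nonneg var_nonneg e) auto
  also have "\<dots> \<le> fold_bound a r / e"
  proof -
    have "sqrt (1 / real K * (\<Sum>j<K. var_X PX (resid a r j))) \<le> fold_bound a r"
      unfolding fold_bound_def fold_stability_def
      using sqrt_mean_le_mean_sqrt_mult[OF K_pos, of "\<lambda>j. var_X PX (resid a r j)"] var_nonneg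
      by (simp add: resid_def[abs_def])
    then show ?thesis
      using e by (simp add: divide_right_mono)
  qed
  finally show ?thesis .
qed

end

section \<open>Integrating out training data and seeds\<close>

lemma measurable_fold_stability:
  "(\<lambda>d\<rho>. fold_stability (fst d\<rho>) (snd d\<rho>)) \<in> borel_measurable (Train \<Otimes>\<^sub>M R)"
proof -
  have "(\<lambda>z. A (fst (fst z)) (snd (fst z)) (snd z) - fb (snd z)) \<in> borel_measurable ((Train \<Otimes>\<^sub>M R) \<Otimes>\<^sub>M PX)"
    using measurable_A measurable_fbar by (simp add: split_beta')
  from borel_measurable_var_X[OF PX.sigma_finite_measure_axioms this]
  show ?thesis
    unfolding fold_stability_def by measurable
qed

lemma measurable_fold_bound: "(\<lambda>\<omega>. fold_bound (fst \<omega>) (snd (snd \<omega>))) \<in> borel_measurable \<Omega>"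
  unfolding fold_bound_def
  by (intro borel_measurable_times borel_measurable_const borel_measurable_sum
      measurable_compose[OF measurable_fold_input measurable_fold_stability, simplified]) auto

lemma measurable_Ftilde:
  assumes j: "j < K"
  shows "Ftilde P SX R A n N K j \<in> borel_measurable \<Omega>"
proof -
  have Xt: "(\<lambda>\<omega>. fst (snd \<omega>) i) \<in> measurable \<Omega> PX" if "i < N" for i
    unfolding sample_space_eq using that
    by (intro measurable_compose[OF measurable_snd] measurable_compose[OF measurable_fst]
        measurable_component_singleton) simp
  have "(\<lambda>\<omega>. cv_pred A n K j \<omega> (fst (snd \<omega>) i)) \<in> borel_measurable \<Omega>" if "i < N" for i
    using measurable_compose[OF measurable_Pair[OF measurable_ident_sets[OF refl] Xt[OF that]]
        measurable_cv_pred[OF j]] by simp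
  moreover have "(\<lambda>\<omega>. \<integral>x. cv_pred A n K j \<omega> x \<partial>PX) \<in> borel_measurable \<Omega>"
    using PX.borel_measurable_lebesgue_integral[of "\<lambda>\<omega> x. cv_pred A n K j \<omega> x" \<Omega>] measurable_cv_pred[OF j]
    by simp
  moreover have "(\<lambda>\<omega>. fb (fst (snd \<omega>) i)) \<in> borel_measurable \<Omega>" if "i < N" for i
    by (rule measurable_compose[OF Xt[OF that] measurable_fbar])
  ultimately show ?thesis
    unfolding Ftilde_def Let_def
    by (intro borel_measurable_times borel_measurable_const borel_measurable_sum borel_measurable_diff) auto
qed

lemma measurable_mean_Ftilde: "mean_Ftilde \<in> borel_measurable \<Omega>"
  unfolding mean_Ftilde_def[abs_def]
  by (intro borel_measurable_times borel_measurable_const borel_measurable_sum measurable_Ftilde) auto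

lemma emeasure_mean_Ftilde_ge:
  assumes e: "0 < e"
  shows "emeasure \<Omega> {\<omega> \<in> space \<Omega>. e \<le> \<bar>mean_Ftilde \<omega>\<bar>}
    \<le> (\<integral>\<^sup>+ \<omega>. ennreal (fold_bound (fst \<omega>) (snd (snd \<omega>)) / e) \<partial>\<Omega>)"
proof -
  let ?B = "{\<omega> \<in> space \<Omega>. e \<le> \<bar>mean_Ftilde \<omega>\<bar>}"
  have B: "?B \<in> sets \<Omega>"
    using measurable_mean_Ftilde by measurable
  have section_bound: "(\<integral>\<^sup>+ x. indicator ?B (a, x, r) \<partial>Feats) \<le> ennreal (fold_bound a r / e)"
    if a: "a \<in> space Data" and r: "r \<in> space Seeds" and folds: "square_integrable_folds a r" for a r
  proof -
    let ?C = "{xt \<in> space Feats. e \<le> \<bar>mean_Ftilde (a, xt, r)\<bar>}"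
    have "(\<lambda>xt. (a, xt, r)) \<in> measurable Feats \<Omega>"
      unfolding sample_space_eq using a r by (intro measurable_Pair) auto
    then have C: "?C \<in> sets Feats"
      using measurable_mean_Ftilde by measurable
    have "(\<integral>\<^sup>+ x. indicator ?B (a, x, r) \<partial>Feats) = (\<integral>\<^sup>+ x. indicator ?C x \<partial>Feats)"
      using a r by (intro nn_integral_cong) (simp add: sample_space_eq space_pair_measure indicator_def)
    also have "\<dots> = ennreal (measure Feats ?C)"
      using C by (simp add: Feats.emeasure_eq_measure)
    also have "\<dots> \<le> ennreal (fold_bound a r / e)"
      by (intro ennreal_leI prob_mean_Ftilde_section_ge[OF a r folds e])
    finally show ?thesis .
  qed
  have "emeasure \<Omega> ?B = (\<integral>\<^sup>+ a. \<integral>\<^sup>+ r. \<integral>\<^sup>+ x. indicator ?B (a, x, r) \<partial>Feats \<partial>Seeds \<partial>Data)"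
    using B nn_integral_sample_space[of "indicator ?B"] by simp
  also have "\<dots> \<le> (\<integral>\<^sup>+ a. \<integral>\<^sup>+ r. ennreal (fold_bound a r / e) \<partial>Seeds \<partial>Data)"
  proof (rule nn_integral_mono_AE)
    show "AE a in Data. (\<integral>\<^sup>+ r. \<integral>\<^sup>+ x. indicator ?B (a, x, r) \<partial>Feats \<partial>Seeds)
        \<le> (\<integral>\<^sup>+ r. ennreal (fold_bound a r / e) \<partial>Seeds)"
      using AE_square_integrable_folds
    proof (rule AE_mp, intro AE_I2 impI)
      fix a
      assume a: "a \<in> space Data" and folds: "AE r in Seeds. square_integrable_folds a r"
      show "(\<integral>\<^sup>+ r. \<integral>\<^sup>+ x. indicator ?B (a, x, r) \<partial>Feats \<partial>Seeds)
          \<le> (\<integral>\<^sup>+ r. ennreal (fold_bound a r / e) \<partial>Seeds)"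
        using folds by (intro nn_integral_mono_AE, elim AE_mp) (auto intro!: AE_I2 section_bound[OF a])
    qed
  qed
  also have "\<dots> = (\<integral>\<^sup>+ \<omega>. ennreal (fold_bound (fst \<omega>) (snd (snd \<omega>)) / e) \<partial>\<Omega>)"
    using nn_integral_sample_space[of "\<lambda>\<omega>. ennreal (fold_bound (fst \<omega>) (snd (snd \<omega>)) / e)"]
      measurable_fold_bound by (simp add: Feats.emeasure_space_1)
  finally show ?thesis .
qed

lemma nn_integral_fold_bound:
  "(\<integral>\<^sup>+ \<omega>. ennreal (fold_bound (fst \<omega>) (snd (snd \<omega>))) \<partial>\<Omega>)
    = (\<integral>\<^sup>+ \<omega>. ennreal (fold_stability (train_data n K 0 (fst \<omega>)) (snd (snd \<omega>) 0)) \<partial>\<Omega>)"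
proof -
  let ?S = "\<lambda>d\<rho>. ennreal (fold_stability (fst d\<rho>) (snd d\<rho>))"
  have S: "?S \<in> borel_measurable (Train \<Otimes>\<^sub>M R)"
    using measurable_fold_stability by measurable
  have bound_eq: "ennreal (fold_bound a r) = (\<Sum>j<K. ennreal (1 / real K) * ?S (train_data n K j a, r j))" for a r
  proof -
    have "ennreal (fold_bound a r) = (\<Sum>j<K. ennreal (1 / real K * fold_stability (train_data n K j a) (r j)))"
      unfolding fold_bound_def sum_distrib_left by (simp add: fold_stability_nonneg)
    also have "\<dots> = (\<Sum>j<K. ennreal (1 / real K) * ?S (train_data n K j a, r j))"
      by (intro sum.cong refl) (simp flip: ennreal_mult')
    finally show ?thesis .
  qed
  have "(\<integral>\<^sup>+ \<omega>. ennreal (fold_bound (fst \<omega>) (snd (snd \<omega>))) \<partial>\<Omega>)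
      = (\<Sum>j<K. ennreal (1 / real K) * (\<integral>\<^sup>+ \<omega>. ?S (train_data n K j (fst \<omega>), snd (snd \<omega>) j) \<partial>\<Omega>))"
    unfolding bound_eq using measurable_compose[OF measurable_fold_input S]
    by (subst nn_integral_sum) (auto intro!: borel_measurable_times_ennreal simp: nn_integral_cmult)
  also have "\<dots> = (\<Sum>j<K. ennreal (1 / real K) * integral\<^sup>N (Train \<Otimes>\<^sub>M R) ?S)"
    by (intro sum.cong refl) (simp add: nn_integral_fold_input[OF _ S, simplified])
  also have "\<dots> = of_nat K * ennreal (1 / real K) * integral\<^sup>N (Train \<Otimes>\<^sub>M R) ?S"
    by (simp add: mult.assoc)
  also have "of_nat K * ennreal (1 / real K) = 1"
    using K_pos by (simp add: ennreal_of_nat_eq_real_of_nat flip: ennreal_mult)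
  finally show ?thesis
    using nn_integral_fold_input[OF K_pos S] by simp
qed

lemma prob_mean_Ftilde_ge:
  assumes e: "0 < e"
    and W: "integrable \<Omega> (\<lambda>\<omega>. sqrt (real K * var_X PX (\<lambda>x. cv_pred A n K 0 \<omega> x - fb x)))"
  shows "measure \<Omega> {\<omega> \<in> space \<Omega>. e \<le> \<bar>mean_Ftilde \<omega>\<bar>}
    \<le> (\<integral>\<omega>. \<bar>sqrt (real K * var_X PX (\<lambda>x. cv_pred A n K 0 \<omega> x - fb x))\<bar> \<partial>\<Omega>) / e"
proof -
  let ?W = "\<lambda>\<omega>. sqrt (real K * var_X PX (\<lambda>x. cv_pred A n K 0 \<omega> x - fb x))"
  have W_eq: "?W \<omega> = fold_stability (train_data n K 0 (fst \<omega>)) (snd (snd \<omega>) 0)" for \<omega>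
    by (simp add: fold_stability_def cv_pred_def)
  have W_nonneg: "0 \<le> ?W \<omega>" for \<omega>
    by (simp add: W_eq fold_stability_nonneg)
  have "ennreal (measure \<Omega> {\<omega> \<in> space \<Omega>. e \<le> \<bar>mean_Ftilde \<omega>\<bar>})
      \<le> (\<integral>\<^sup>+ \<omega>. ennreal (1 / e) * ennreal (fold_bound (fst \<omega>) (snd (snd \<omega>))) \<partial>\<Omega>)"
    using emeasure_mean_Ftilde_ge[OF e] e
    by (simp add: \<Omega>.emeasure_eq_measure fold_bound_nonneg divide_inverse_commute flip: ennreal_mult)
  also have "\<dots> = ennreal (1 / e) * (\<integral>\<^sup>+ \<omega>. ennreal (?W \<omega>) \<partial>\<Omega>)"
    using measurable_fold_bound by (simp add: nn_integral_cmult nn_integral_fold_bound W_eq)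
  also have "\<dots> = ennreal ((\<integral>\<omega>. ?W \<omega> \<partial>\<Omega>) / e)"
    using W W_nonneg e
    by (simp add: nn_integral_eq_integral integral_nonneg divide_inverse_commute flip: ennreal_mult)
  finally show ?thesis
    using W_nonneg e by (simp add: ennreal_le_iff integral_nonneg divide_nonneg_pos)
qed

end

lemma prob_to_zero_if_Markov_bound:
  fixes S W :: "nat \<Rightarrow> 'a \<Rightarrow> real"
  assumes S: "\<And>n. S n \<in> borel_measurable (M n)"
    and bound: "\<And>n e. 0 < e \<Longrightarrow>
      measure (M n) {\<omega> \<in> space (M n). e \<le> \<bar>S n \<omega>\<bar>} \<le> (\<integral>\<omega>. \<bar>W n \<omega>\<bar> \<partial>M n) / e"
    and W: "L1_to_zero M W"
  shows "prob_to_zero M S"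
  unfolding prob_to_zero_def
proof (intro conjI allI impI S)
  fix e :: real
  assume e: "0 < e"
  show "(\<lambda>n. measure (M n) {\<omega> \<in> space (M n). e \<le> \<bar>S n \<omega>\<bar>}) \<longlonglongrightarrow> 0"
  proof (rule tendsto_sandwich[of "\<lambda>_. 0" _ _ "\<lambda>n. (\<integral>\<omega>. \<bar>W n \<omega>\<bar> \<partial>M n) / e"])
    show "\<forall>\<^sub>F n in sequentially. measure (M n) {\<omega> \<in> space (M n). e \<le> \<bar>S n \<omega>\<bar>}
        \<le> (\<integral>\<omega>. \<bar>W n \<omega>\<bar> \<partial>M n) / e"
      using bound[OF e] by simp
    show "(\<lambda>n. (\<integral>\<omega>. \<bar>W n \<omega>\<bar> \<partial>M n) / e) \<longlonglongrightarrow> 0"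
      using W unfolding L1_to_zero_def by (intro tendsto_divide_zero) simp
  qed simp_all
qed

theorem lemma1:
  fixes P :: "('x \<times> 'y) measure" and SX :: "'x measure" and SY :: "'y measure"
    and R :: "nat \<Rightarrow> 'r measure"
    and A :: "nat \<Rightarrow> (nat \<Rightarrow> 'x \<times> 'y) \<Rightarrow> 'r \<Rightarrow> 'x \<Rightarrow> real"
    and K N :: "nat \<Rightarrow> nat"
  assumes P: "prob_space P" and sets_P: "sets P = sets (SX \<Otimes>\<^sub>M SY)"
    and R: "\<And>n. prob_space (R n)"
    and K: "\<And>n. 0 < K n" "\<And>n. K n dvd n"
    and N: "\<And>n. 0 < N n"
    and A_meas: "\<And>n. (\<lambda>(dr, x). A n (fst dr) (snd dr) x)
        \<in> borel_measurable ((PiM {0..<n - n div K n} (\<lambda>_. P) \<Otimes>\<^sub>M R n) \<Otimes>\<^sub>M SX)"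
    and second_moment: "\<And>n. integrable (sample_space P SX (R n) n (N n) (K n) \<Otimes>\<^sub>M feat_dist P SX)
        (\<lambda>(\<omega>, x). (cv_pred (A n) n (K n) 0 \<omega> x)\<^sup>2)"
    and stable: "L1_to_zero (\<lambda>n. sample_space P SX (R n) n (N n) (K n))
        (\<lambda>n \<omega>. sqrt (real (K n) * var_X (feat_dist P SX)
           (\<lambda>x. cv_pred (A n) n (K n) 0 \<omega> x
                - fbar (sample_space P SX (R n) n (N n) (K n)) (A n) n (K n) x)))"
  shows "prob_to_zero (\<lambda>n. sample_space P SX (R n) n (N n) (K n))
        (\<lambda>n \<omega>. (1 / real (K n)) * (\<Sum>j<K n. Ftilde P SX (R n) (A n) n (N n) (K n) j \<omega>))"
proof -
  let ?M = "\<lambda>n. sample_space P SX (R n) n (N n) (K n)"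
  let ?S = "\<lambda>n \<omega>. 1 / real (K n) * (\<Sum>j<K n. Ftilde P SX (R n) (A n) n (N n) (K n) j \<omega>)"
  let ?W = "\<lambda>n \<omega>. sqrt (real (K n) * var_X (feat_dist P SX)
    (\<lambda>x. cv_pred (A n) n (K n) 0 \<omega> x - fbar (?M n) (A n) n (K n) x))"
  have S_measurable: "?S n \<in> borel_measurable (?M n)"
    and S_bound: "0 < e \<Longrightarrow> measure (?M n) {\<omega> \<in> space (?M n). e \<le> \<bar>?S n \<omega>\<bar>}
      \<le> (\<integral>\<omega>. \<bar>?W n \<omega>\<bar> \<partial>?M n) / e" for n e
  proof -
    interpret cross_fitting P SX SY "R n" "A n" n "N n" "K n"
      unfolding cross_fitting_def using P sets_P R K(1) N A_meas second_moment by blast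
    show "?S n \<in> borel_measurable (?M n)"
      using measurable_mean_Ftilde unfolding mean_Ftilde_def[abs_def] .
    show "0 < e \<Longrightarrow> measure (?M n) {\<omega> \<in> space (?M n). e \<le> \<bar>?S n \<omega>\<bar>}
      \<le> (\<integral>\<omega>. \<bar>?W n \<omega>\<bar> \<partial>?M n) / e"
      using prob_mean_Ftilde_ge stable unfolding mean_Ftilde_def L1_to_zero_def by simp
  qed
  show ?thesis
    using S_measurable S_bound stable by (rule prob_to_zero_if_Markov_bound)
qed

end
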